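(* Let $h:\mathbb{R}^d\to\mathbb{R}$ be 1-Lipschitz and $P_th(x)=\mathbb{E}h(B^x_t)$, where $B^x_t=x+B_t$ and $B$ is a standard $d$-dimensional Brownian motion. Then for all $x,v,v_1,v_2\in\mathbb{R}^d$ and $t>0$, $$\big|\langle\nabla^2(P_th)(x+v)-\nabla^2(P_th)(x),v_1v_2^T\rangle_{\mathrm{HS}}\big|\le\frac{2|v_1||v_2||v|}{t},\qquad \big|\Delta(P_th)(x+v)-\Delta(P_th)(x)\big|\le\frac{2d}{t}|v|.$$
   Context: $\langle A,B\rangle_{\mathrm{HS}}=\sum_{i,j}A_{ij}B_{ij}$ for $d\times d$ matrices. *)

theory Defs
  imports "HOL-Analysis.Analysis"
begin

text \<open>Heat semigroup: P_t h (x) = E h(x + B_t), with B_t ~ N(0, t I_d),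
  written as integration against the Gaussian density on real^'n (d = CARD('n)).\<close>
definition heat_kernel :: "real \<Rightarrow> real ^ 'n \<Rightarrow> real" where
  "heat_kernel t z = (2 * pi * t) powr (- real CARD('n) / 2) * exp (- (norm z)\<^sup>2 / (2 * t))"

definition heat_sg :: "real \<Rightarrow> (real ^ 'n \<Rightarrow> real) \<Rightarrow> real ^ 'n \<Rightarrow> real" where
  "heat_sg t h x = integral\<^sup>L lborel (\<lambda>y. heat_kernel t (y - x) * h y)"

definition partial :: "'n \<Rightarrow> (real ^ 'n \<Rightarrow> real) \<Rightarrow> real ^ 'n \<Rightarrow> real" where
  "partial i f x = deriv (\<lambda>s. f (x + s *\<^sub>R axis i 1)) 0"

definition hessian :: "(real ^ 'n \<Rightarrow> real) \<Rightarrow> real ^ 'n \<Rightarrow> real ^ 'n ^ 'n" where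
  "hessian f x = (\<chi> i j. partial i (partial j f) x)"

definition laplacian :: "(real ^ 'n \<Rightarrow> real) \<Rightarrow> real ^ 'n \<Rightarrow> real" where
  "laplacian f x = (\<Sum>i\<in>UNIV. hessian f x $ i $ i)"

definition hs_inner :: "real ^ 'n ^ 'n \<Rightarrow> real ^ 'n ^ 'n \<Rightarrow> real" where
  "hs_inner A B = (\<Sum>i\<in>UNIV. \<Sum>j\<in>UNIV. A $ i $ j * B $ i $ j)"

definition outer :: "real ^ 'n \<Rightarrow> real ^ 'n \<Rightarrow> real ^ 'n ^ 'n" where
  "outer u w = (\<chi> i j. u $ i * w $ j)"

end

theory Submission
  imports Defs "HOL-Probability.Distributions"
begin

text \<open>
  Differentiating under the integral sign moves both derivatives of \<open>P\<^sub>t h = \<phi>\<^sub>t * h\<close> onto the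
  Gaussian kernel:
  \<open>\<langle>\<nabla>\<^sup>2 P\<^sub>t h (x), v\<^sub>1 v\<^sub>2\<^sup>T\<rangle> = \<integral> \<phi>\<^sub>t(z) ((z\<cdot>v\<^sub>1)(z\<cdot>v\<^sub>2)/t\<^sup>2 - (v\<^sub>1\<cdot>v\<^sub>2)/t) h(x + z) dz\<close>.
  Hence the difference of this quantity at \<open>x + v\<close> and at \<open>x\<close> is the integral of the same kernel
  against \<open>h(x + v + z) - h(x + z)\<close>, which is bounded by \<open>|v|\<close>, and it remains to bound the
  \<open>L\<^sup>1\<close> norm of the kernel by \<open>2|v\<^sub>1||v\<^sub>2|/t\<close>: this follows from the weighted AM-GM inequality
  and the second moments \<open>\<integral> \<phi>\<^sub>t(z) (z\<cdot>u)\<^sup>2 dz = t|u|\<^sup>2\<close>. Taking \<open>v\<^sub>1 = v\<^sub>2 = e\<^sub>i\<close> and summing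
  over \<open>i\<close> gives the bound on the Laplacian. Differentiation under the integral is justified by
  dominated convergence: all kernels involved are bounded by Gaussians times polynomials, while a
  Lipschitz function grows at most linearly.
\<close>

section \<open>Integration on Euclidean space\<close>

lemma integrable_abs_le:
  fixes f g :: "'a \<Rightarrow> real"
  assumes "integrable M g" and "f \<in> borel_measurable M" and "\<And>x. \<bar>f x\<bar> \<le> g x"
  shows "integrable M f"
  using assms(2,3)
  by (intro Bochner_Integration.integrable_bound[OF assms(1)]) (auto intro!: AE_I2 order_trans[OF _ abs_ge_self])

lemma integral_dominated_convergence_at:
  fixes s :: "'c::first_countable_topology \<Rightarrow> 'a \<Rightarrow> 'b::{banach, second_countable_topology}"
  assumes "f \<in> borel_measurable M" and "\<And>t. s t \<in> borel_measurable M" and "integrable M w"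
    and lim: "AE x in M. ((\<lambda>t. s t x) \<longlongrightarrow> f x) (at c)"
    and bound: "\<forall>\<^sub>F t in at c. AE x in M. norm (s t x) \<le> w x"
  shows "((\<lambda>t. integral\<^sup>L M (s t)) \<longlongrightarrow> integral\<^sup>L M f) (at c)"
proof (rule tendsto_at_iff_sequentially[THEN iffD2], intro allI impI)
  fix X :: "nat \<Rightarrow> 'c"
  assume "\<forall>i. X i \<in> UNIV - {c}" and "X \<longlonglongrightarrow> c"
  then have X: "filterlim X (at c) sequentially"
    by (simp add: filterlim_at)
  from filterlim_iff[THEN iffD1, OF this, rule_format, OF bound]
  obtain N where w: "\<And>n. N \<le> n \<Longrightarrow> AE x in M. norm (s (X n) x) \<le> w x"
    by (auto simp: eventually_sequentially)
  have "(\<lambda>n. integral\<^sup>L M (s (X n))) \<longlonglongrightarrow> integral\<^sup>L M f"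
  proof (rule LIMSEQ_offset, rule integral_dominated_convergence)
    show "AE x in M. norm (s (X (n + N)) x) \<le> w x" for n
      by (rule w) auto
    show "AE x in M. (\<lambda>n. s (X (n + N)) x) \<longlonglongrightarrow> f x"
      using lim
    proof eventually_elim
      fix x
      assume "((\<lambda>t. s t x) \<longlongrightarrow> f x) (at c)"
      then show "(\<lambda>n. s (X (n + N)) x) \<longlonglongrightarrow> f x"
        by (intro LIMSEQ_ignore_initial_segment filterlim_compose[OF _ X])
    qed
  qed fact+
  then show "((\<lambda>t. integral\<^sup>L M (s t)) \<circ> X) \<longlonglongrightarrow> integral\<^sup>L M f"
    by (simp add: comp_def)
qed

lemma
  fixes f :: "'a::euclidean_space \<Rightarrow> real \<Rightarrow> real"
  assumes f: "\<And>b. b \<in> Basis \<Longrightarrow> integrable lborel (f b)"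
  shows integrable_lborel_prod_Basis: "integrable lborel (\<lambda>x::'a. \<Prod>b\<in>Basis. f b (x \<bullet> b))"
    and integral_lborel_prod_Basis:
      "(\<integral>x. (\<Prod>b\<in>Basis. f b (x \<bullet> b)) \<partial>lborel) = (\<Prod>b\<in>Basis. \<integral>s. f b s \<partial>lborel)"
proof -
  interpret product_sigma_finite "\<lambda>_. lborel :: real measure" ..
  have [measurable]: "f b \<in> borel_measurable borel" if "b \<in> Basis" for b
    using f[OF that] by (simp add: borel_measurable_integrable)
  have coord: "(\<Prod>b\<in>Basis. f b ((\<Sum>c\<in>Basis. \<omega> c *\<^sub>R c) \<bullet> b)) = (\<Prod>b\<in>Basis. f b (\<omega> b))"
    for \<omega> :: "'a \<Rightarrow> real"
    by (intro prod.cong) auto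
  have int: "integrable (\<Pi>\<^sub>M b\<in>Basis. lborel) (\<lambda>\<omega>. \<Prod>b\<in>Basis. f b (\<omega> b))"
    by (intro product_integrable_prod f) simp
  show "integrable lborel (\<lambda>x::'a. \<Prod>b\<in>Basis. f b (x \<bullet> b))"
    by (subst lborel_eq, subst integrable_distr_eq) (use int in \<open>simp_all add: coord\<close>)
  show "(\<integral>x. (\<Prod>b\<in>Basis. f b (x \<bullet> b)) \<partial>lborel) = (\<Prod>b\<in>Basis. \<integral>s. f b s \<partial>lborel)"
    by (subst lborel_eq, subst integral_distr) (simp_all add: coord product_integral_prod f)
qed

lemma
  fixes f :: "'a::euclidean_space \<Rightarrow> real"
  assumes [measurable]: "f \<in> borel_measurable borel"
  shows integrable_lborel_translate: "integrable lborel (\<lambda>z. f (c + z)) \<longleftrightarrow> integrable lborel f"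
    and integral_lborel_translate: "(\<integral>z. f (c + z) \<partial>lborel) = integral\<^sup>L lborel f"
  using integrable_distr_eq[of "(+) c" lborel borel f] integral_distr[of "(+) c" lborel borel f]
  by (simp_all add: lborel_distr_plus)

lemma integrable_gaussian:
  assumes "a > 0"
  shows "integrable lborel (\<lambda>y::'a::euclidean_space. exp (- a * (norm (y - x))\<^sup>2))"
proof -
  define \<sigma> where "\<sigma> = sqrt (1 / (2 * a))"
  have "\<sigma> > 0" "\<sigma>\<^sup>2 = 1 / (2 * a)"
    using assms by (simp_all add: \<sigma>_def)
  then have "exp (- a * s\<^sup>2) = sqrt (2 * pi * \<sigma>\<^sup>2) * normal_density 0 \<sigma> s" for s
    using assms by (simp add: normal_density_def field_simps)
  then have "integrable lborel (\<lambda>s. exp (- a * s\<^sup>2))"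
    using integrable_normal_density[OF \<open>\<sigma> > 0\<close>] by simp
  then have "integrable lborel (\<lambda>z::'a. \<Prod>b\<in>Basis. exp (- a * (z \<bullet> b)\<^sup>2))"
    by (rule integrable_lborel_prod_Basis)
  moreover have "(\<Prod>b\<in>Basis. exp (- a * (z \<bullet> b)\<^sup>2)) = exp (- a * (norm z)\<^sup>2)" for z :: 'a
    unfolding power2_norm_eq_inner euclidean_inner[of z z]
    by (simp add: exp_sum[symmetric] sum_distrib_left power2_eq_square)
  ultimately show ?thesis
    using integrable_lborel_translate[of "\<lambda>y. exp (- a * (norm (y - x))\<^sup>2)" x] by simp
qed

section \<open>The heat kernel\<close>

lemma heat_kernel_eq_prod_normal_density:
  fixes z :: "real ^ 'n"
  assumes "t > 0"
  shows "heat_kernel t z = (\<Prod>b\<in>Basis. normal_density 0 (sqrt t) (z \<bullet> b))"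
proof -
  have density: "normal_density 0 (sqrt t) s = inverse (sqrt (2 * pi * t)) * exp (- s\<^sup>2 / (2 * t))" for s
    unfolding normal_density_def using assms by (simp add: inverse_eq_divide)
  have norm_sq: "(norm z)\<^sup>2 = (\<Sum>b\<in>Basis. (z \<bullet> b)\<^sup>2)"
    unfolding power2_norm_eq_inner euclidean_inner[of z z] by (simp add: power2_eq_square)
  have "(\<Prod>b\<in>Basis. normal_density 0 (sqrt t) (z \<bullet> b))
      = inverse (sqrt (2 * pi * t)) ^ CARD('n) * exp (- (norm z)\<^sup>2 / (2 * t))"
    by (simp add: density prod.distrib exp_sum[symmetric] sum_divide_distrib[symmetric] sum_negf norm_sq)
  also have "inverse (sqrt (2 * pi * t)) ^ CARD('n) = (2 * pi * t) powr (- real CARD('n) / 2)"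
    using assms by (simp add: powr_half_sqrt[symmetric] powr_minus[symmetric] powr_powr
        powr_realpow[symmetric])
  finally show ?thesis by (simp add: heat_kernel_def)
qed

lemma heat_kernel_pos: "t > 0 \<Longrightarrow> heat_kernel t z > 0"
  by (simp add: heat_kernel_def)

lemma heat_kernel_measurable [measurable]: "heat_kernel t \<in> borel_measurable borel"
  unfolding heat_kernel_def[abs_def] by measurable

lemma
  assumes "t > 0"
  shows integrable_heat_kernel: "integrable lborel (heat_kernel t :: real ^ 'n \<Rightarrow> real)"
    and integral_heat_kernel: "(\<integral>z. heat_kernel t (z :: real ^ 'n) \<partial>lborel) = 1"
proof -
  have "sqrt t > 0" using assms by simp
  note normal = integrable_normal_density[OF this] integral_normal_density[OF this]
  have prod: "heat_kernel t = (\<lambda>z::real ^ 'n. \<Prod>b\<in>Basis. normal_density 0 (sqrt t) (z \<bullet> b))"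
    using heat_kernel_eq_prod_normal_density[OF assms] by blast
  show "integrable lborel (heat_kernel t :: real ^ 'n \<Rightarrow> real)"
    unfolding prod by (rule integrable_lborel_prod_Basis) (rule normal)
  show "(\<integral>z. heat_kernel t (z :: real ^ 'n) \<partial>lborel) = 1"
    unfolding prod by (subst integral_lborel_prod_Basis) (simp_all add: normal)
qed

lemma
  fixes b c :: "real ^ 'n"
  assumes "t > 0" and "b \<in> Basis" and "c \<in> Basis"
  shows integrable_heat_kernel_second_moment:
      "integrable lborel (\<lambda>z. heat_kernel t z * (z \<bullet> b) * (z \<bullet> c))"
    and integral_heat_kernel_second_moment:
      "(\<integral>z. heat_kernel t z * (z \<bullet> b) * (z \<bullet> c) \<partial>lborel) = (if b = c then t else 0)"
proof -
  have st: "sqrt t > 0" using assms by simp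
  define f where "f d s = normal_density 0 (sqrt t) s * (if d = b then s else 1) * (if d = c then s else 1)"
    for d s
  have prod_f: "heat_kernel t z * (z \<bullet> b) * (z \<bullet> c) = (\<Prod>d\<in>Basis. f d (z \<bullet> d))" for z
    using assms by (simp add: f_def prod.distrib heat_kernel_eq_prod_normal_density prod.delta)
  have moment: "integrable lborel (\<lambda>s. normal_density 0 (sqrt t) s * s ^ k)" for k
    using integrable_normal_moment[OF st, of 0 k] by simp
  have int_f: "integrable lborel (f d)" for d
    using moment[of 0] moment[of 1] moment[of 2]
    by (cases "d = b"; cases "d = c"; simp add: f_def[abs_def] power2_eq_square mult.assoc)
  show "integrable lborel (\<lambda>z. heat_kernel t z * (z \<bullet> b) * (z \<bullet> c))"
    by (simp add: prod_f integrable_lborel_prod_Basis int_f)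
  have "(\<integral>z. heat_kernel t z * (z \<bullet> b) * (z \<bullet> c) \<partial>lborel) = (\<Prod>d\<in>Basis. integral\<^sup>L lborel (f d))"
    by (simp add: prod_f integral_lborel_prod_Basis int_f)
  also have "\<dots> = (if b = c then t else 0)"
  proof (cases "b = c")
    case True
    have "integral\<^sup>L lborel (f d) = (if d = b then t else 1)" for d
      using integral_normal_moment_even[OF st, of 0 1] st True
      by (simp add: f_def[abs_def] integral_normal_density[OF st] power2_eq_square mult.assoc)
    then show ?thesis using True assms by (simp add: prod.delta)
  next
    case False
    have "integral\<^sup>L lborel (f b) = 0"
      using integral_normal_moment_odd[OF st, of 0 0] False by (simp add: f_def[abs_def])
    then show ?thesis using False assms by (auto simp: prod_zero_iff)
  qed
  finally show "(\<integral>z. heat_kernel t z * (z \<bullet> b) * (z \<bullet> c) \<partial>lborel) = (if b = c then t else 0)" .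
qed

lemma
  fixes u v :: "real ^ 'n"
  assumes "t > 0"
  shows integrable_heat_kernel_inner_inner:
      "integrable lborel (\<lambda>z. heat_kernel t z * (z \<bullet> u) * (z \<bullet> v))"
    and integral_heat_kernel_inner_inner:
      "(\<integral>z. heat_kernel t z * (z \<bullet> u) * (z \<bullet> v) \<partial>lborel) = t * (u \<bullet> v)"
proof -
  have expand: "heat_kernel t z * (z \<bullet> u) * (z \<bullet> v)
      = (\<Sum>b\<in>Basis. \<Sum>c\<in>Basis. ((u \<bullet> b) * (v \<bullet> c)) * (heat_kernel t z * (z \<bullet> b) * (z \<bullet> c)))" for z
    by (simp add: euclidean_inner[of z u] euclidean_inner[of z v] sum_product sum_distrib_left mult_ac)
  show "integrable lborel (\<lambda>z. heat_kernel t z * (z \<bullet> u) * (z \<bullet> v))"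
    unfolding expand
    by (auto intro!: Bochner_Integration.integrable_sum Bochner_Integration.integrable_mult_right
        integrable_heat_kernel_second_moment assms)
  have "(\<integral>z. heat_kernel t z * (z \<bullet> u) * (z \<bullet> v) \<partial>lborel)
      = (\<Sum>b\<in>Basis. \<Sum>c\<in>Basis. (u \<bullet> b) * (v \<bullet> c) * (if b = c then t else 0))"
    unfolding expand
    by (simp add: Bochner_Integration.integral_sum integrable_heat_kernel_second_moment
        integral_heat_kernel_second_moment assms)
  also have "\<dots> = t * (u \<bullet> v)"
    by (simp add: euclidean_inner[of u v] sum_distrib_left if_distrib[of "\<lambda>x. _ * x"] sum.delta'
        mult_ac cong: if_cong)
  finally show "(\<integral>z. heat_kernel t z * (z \<bullet> u) * (z \<bullet> v) \<partial>lborel) = t * (u \<bullet> v)" .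
qed

section \<open>Kernels with Gaussian decay\<close>

lemma le_one_plus_square: "(x::real) \<le> 1 + x\<^sup>2"
proof -
  have "2 * x \<le> x\<^sup>2 + 1"
    using sum_squares_bound[of x 1] by simp
  then show ?thesis
    using zero_le_power2[of x] by (cases "x \<ge> 0") linarith+
qed

lemma one_plus_square_mult_exp_le:
  fixes b u :: real
  assumes "b > 0"
  shows "(1 + u\<^sup>2) * exp (- (2 * b) * u\<^sup>2) \<le> (1 + 1 / b) * exp (- b * u\<^sup>2)"
proof -
  define E where "E = exp (- b * u\<^sup>2)"
  have E: "0 < E" "E \<le> 1"
    using assms by (auto simp: E_def)
  have "b * u\<^sup>2 \<le> exp (b * u\<^sup>2)"
    using exp_ge_add_one_self[of "b * u\<^sup>2"] by linarith
  then have "u\<^sup>2 * E \<le> 1 / b"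
    using assms by (simp add: E_def exp_minus field_simps)
  then have "E * (u\<^sup>2 * E) \<le> E * (1 / b)"
    using E by (intro mult_left_mono) auto
  moreover have "E * E \<le> E"
    using E by (simp add: mult_le_cancel_left1)
  ultimately have "(1 + u\<^sup>2) * (E * E) \<le> E + 1 / b * E"
    by (simp add: algebra_simps)
  moreover have "exp (- (2 * b) * u\<^sup>2) = E * E"
    by (simp add: E_def exp_add[symmetric])
  ultimately show ?thesis
    by (simp add: E_def algebra_simps)
qed

lemma exp_neg_norm_diff_sq_le:
  fixes z d :: "'a::real_normed_vector"
  assumes "a \<ge> 0" and "norm d \<le> 1"
  shows "exp (- a * (norm (z - d))\<^sup>2) \<le> exp a * exp (- (a / 2) * (norm z)\<^sup>2)"
proof -
  have "norm z \<le> norm (z - d) + 1"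
    using norm_triangle_ineq[of "z - d" d] assms(2) by simp
  then have "(norm z)\<^sup>2 \<le> (norm (z - d) + 1)\<^sup>2"
    by (simp add: power_mono)
  also have "\<dots> \<le> 2 * (norm (z - d))\<^sup>2 + 2"
    using sum_squares_bound[of "norm (z - d)" 1] by (simp add: power2_sum)
  finally have "a * (norm z)\<^sup>2 \<le> a * (2 * (norm (z - d))\<^sup>2 + 2)"
    using assms(1) by (rule mult_left_mono)
  then have "- a * (norm (z - d))\<^sup>2 \<le> a + - (a / 2) * (norm z)\<^sup>2"
    by (simp add: algebra_simps)
  then show ?thesis
    by (simp add: exp_add[symmetric])
qed

definition gaussian_decay :: "real \<Rightarrow> ('a::real_normed_vector \<Rightarrow> real) \<Rightarrow> bool" where
  "gaussian_decay a K \<longleftrightarrow> (\<exists>C. \<forall>w. \<bar>K w\<bar> \<le> C * exp (- a * (norm w)\<^sup>2))"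

lemma gaussian_bound_nonneg:
  assumes "\<And>w. \<bar>K w\<bar> \<le> C * exp (- a * (norm w)\<^sup>2)"
  shows "C \<ge> 0"
  using order_trans[OF abs_ge_zero assms[of 0]] by (simp add: zero_le_mult_iff)

lemma integrable_gaussian_decay:
  fixes K :: "'a::euclidean_space \<Rightarrow> real"
  assumes "a > 0" and "gaussian_decay a K" and "K \<in> borel_measurable borel"
  shows "integrable lborel K"
proof -
  obtain C where C: "\<And>w. \<bar>K w\<bar> \<le> C * exp (- a * (norm w)\<^sup>2)"
    using assms(2) by (auto simp: gaussian_decay_def)
  have "integrable lborel (\<lambda>w::'a. C * exp (- a * (norm w)\<^sup>2))"
    using integrable_gaussian[OF assms(1), of "0::'a"] by simp
  from integrable_abs_le[OF this _ C] show ?thesis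
    using assms(3) by simp
qed

lemma lipschitz_on_abs_le:
  assumes "L-lipschitz_on UNIV h"
  shows "\<bar>h y\<bar> \<le> \<bar>h x\<bar> + L * norm (y - x)"
  using lipschitz_onD[OF assms, of y x] by (simp add: dist_real_def dist_norm)

lemma lipschitz_on_borel_measurable:
  fixes h :: "'a::euclidean_space \<Rightarrow> real"
  shows "L-lipschitz_on UNIV h \<Longrightarrow> h \<in> borel_measurable borel"
  by (intro borel_measurable_continuous_onI lipschitz_on_continuous_on)

lemma lipschitz_mult_gaussian_le:
  assumes "a > 0" and "L-lipschitz_on UNIV h"
  shows "\<bar>h y\<bar> * exp (- (a / 2) * (norm (y - x))\<^sup>2)
    \<le> (\<bar>h x\<bar> + L) * (1 + 4 / a) * exp (- (a / 4) * (norm (y - x))\<^sup>2)"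
proof -
  define u where "u = norm (y - x)"
  have "L \<ge> 0"
    using assms(2) by (rule lipschitz_on_nonneg)
  have "L * u \<le> L * (1 + u\<^sup>2)"
    using le_one_plus_square \<open>L \<ge> 0\<close> by (rule mult_left_mono)
  moreover have "\<bar>h x\<bar> \<le> \<bar>h x\<bar> * (1 + u\<^sup>2)"
    by (simp add: distrib_left)
  ultimately have "\<bar>h y\<bar> \<le> (\<bar>h x\<bar> + L) * (1 + u\<^sup>2)"
    using lipschitz_on_abs_le[OF assms(2), of y x] unfolding u_def distrib_right by linarith
  then have "\<bar>h y\<bar> * exp (- (a / 2) * u\<^sup>2) \<le> (\<bar>h x\<bar> + L) * ((1 + u\<^sup>2) * exp (- (2 * (a / 4)) * u\<^sup>2))"
    by (simp add: mult_right_mono mult.assoc)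
  also have "\<dots> \<le> (\<bar>h x\<bar> + L) * ((1 + 4 / a) * exp (- (a / 4) * u\<^sup>2))"
    using one_plus_square_mult_exp_le[of "a / 4" u] assms(1) \<open>L \<ge> 0\<close> by (intro mult_left_mono) auto
  finally show ?thesis
    by (simp add: u_def mult.assoc)
qed

definition kernel_transform :: "('a::euclidean_space \<Rightarrow> real) \<Rightarrow> ('a \<Rightarrow> real) \<Rightarrow> 'a \<Rightarrow> real" where
  "kernel_transform K h x = (\<integral>y. K (y - x) * h y \<partial>lborel)"

lemma integrable_kernel_transform:
  fixes K :: "'a::euclidean_space \<Rightarrow> real"
  assumes "a > 0" and "gaussian_decay a K" and [measurable]: "K \<in> borel_measurable borel"
    and lip: "L-lipschitz_on UNIV h"
  shows "integrable lborel (\<lambda>y. K (y - x) * h y)"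
proof -
  obtain C where C: "\<And>w. \<bar>K w\<bar> \<le> C * exp (- a * (norm w)\<^sup>2)"
    using assms(2) by (auto simp: gaussian_decay_def)
  have [measurable]: "h \<in> borel_measurable borel"
    using lip by (rule lipschitz_on_borel_measurable)
  have bound: "\<bar>K (y - x) * h y\<bar> \<le> C * ((\<bar>h x\<bar> + L) * (1 + 4 / a)) * exp (- (a / 4) * (norm (y - x))\<^sup>2)"
    for y
  proof -
    have "(a / 2) * (norm (y - x))\<^sup>2 \<le> a * (norm (y - x))\<^sup>2"
      using assms(1) by (intro mult_right_mono) auto
    then have "C * exp (- a * (norm (y - x))\<^sup>2) \<le> C * exp (- (a / 2) * (norm (y - x))\<^sup>2)"
      using gaussian_bound_nonneg[OF C] by (intro mult_left_mono) auto
    then have "\<bar>K (y - x)\<bar> \<le> C * exp (- (a / 2) * (norm (y - x))\<^sup>2)"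
      using C[of "y - x"] by linarith
    then have "\<bar>K (y - x) * h y\<bar> \<le> C * exp (- (a / 2) * (norm (y - x))\<^sup>2) * \<bar>h y\<bar>"
      by (simp add: abs_mult mult_right_mono)
    also have "\<dots> \<le> C * ((\<bar>h x\<bar> + L) * (1 + 4 / a) * exp (- (a / 4) * (norm (y - x))\<^sup>2))"
      using lipschitz_mult_gaussian_le[OF assms(1) lip, of y x] gaussian_bound_nonneg[OF C]
      by (simp add: mult_left_mono mult_ac)
    finally show ?thesis
      by (simp add: mult_ac)
  qed
  have "integrable lborel (\<lambda>y. C * ((\<bar>h x\<bar> + L) * (1 + 4 / a)) * exp (- (a / 4) * (norm (y - x))\<^sup>2))"
    using integrable_gaussian[of "a / 4" x] assms(1) by simp
  from integrable_abs_le[OF this _ bound] show ?thesis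
    by simp
qed

lemma
  fixes K :: "'a::euclidean_space \<Rightarrow> real"
  assumes "a > 0" and "gaussian_decay a K" and [measurable]: "K \<in> borel_measurable borel"
    and lip: "L-lipschitz_on UNIV h"
  shows integrable_kernel_transform_translate: "integrable lborel (\<lambda>z. K z * h (x + z))"
    and kernel_transform_eq_translate: "kernel_transform K h x = (\<integral>z. K z * h (x + z) \<partial>lborel)"
proof -
  have [measurable]: "h \<in> borel_measurable borel"
    using lip by (rule lipschitz_on_borel_measurable)
  show "integrable lborel (\<lambda>z. K z * h (x + z))"
    using integrable_kernel_transform[OF assms, of x]
      integrable_lborel_translate[of "\<lambda>y. K (y - x) * h y" x] by simp
  show "kernel_transform K h x = (\<integral>z. K z * h (x + z) \<partial>lborel)"
    using integral_lborel_translate[of "\<lambda>y. K (y - x) * h y" x] by (simp add: kernel_transform_def)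
qed

lemma lipschitz_on_kernel_transform:
  fixes K :: "'a::euclidean_space \<Rightarrow> real"
  assumes "a > 0" and "gaussian_decay a K" and [measurable]: "K \<in> borel_measurable borel"
    and lip: "L-lipschitz_on UNIV h"
  shows "(L * (\<integral>z. \<bar>K z\<bar> \<partial>lborel))-lipschitz_on UNIV (kernel_transform K h)"
proof (rule lipschitz_onI)
  fix x y :: 'a
  note int = integrable_kernel_transform_translate[OF assms]
  have int_abs: "integrable lborel (\<lambda>z. \<bar>K z\<bar>)"
    using integrable_gaussian_decay[OF assms(1-3)] by simp
  have "kernel_transform K h x - kernel_transform K h y = (\<integral>z. K z * (h (x + z) - h (y + z)) \<partial>lborel)"
    by (simp add: kernel_transform_eq_translate[OF assms] int right_diff_distrib)
  also have "\<bar>\<dots>\<bar> \<le> (\<integral>z. \<bar>K z\<bar> * (L * dist x y) \<partial>lborel)"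
  proof (rule integral_abs_bound_integral)
    show "integrable lborel (\<lambda>z. K z * (h (x + z) - h (y + z)))"
      by (simp add: int right_diff_distrib)
    show "integrable lborel (\<lambda>z. \<bar>K z\<bar> * (L * dist x y))"
      using int_abs by simp
    show "\<bar>K z * (h (x + z) - h (y + z))\<bar> \<le> \<bar>K z\<bar> * (L * dist x y)" for z
      using lipschitz_onD[OF lip, of "x + z" "y + z"]
      by (simp add: abs_mult dist_real_def dist_add_cancel mult_left_mono)
  qed
  finally show "dist (kernel_transform K h x) (kernel_transform K h y)
      \<le> L * (\<integral>z. \<bar>K z\<bar> \<partial>lborel) * dist x y"
    by (simp add: dist_real_def mult_ac)
next
  show "0 \<le> L * (\<integral>z. \<bar>K z\<bar> \<partial>lborel)"
    using lipschitz_on_nonneg[OF lip] by simp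
qed

lemma gaussian_difference_le:
  fixes K D :: "'a::real_normed_vector \<Rightarrow> real"
  assumes "a \<ge> 0" and D: "\<And>w. \<bar>D w\<bar> \<le> C * exp (- a * (norm w)\<^sup>2)" and "norm e \<le> 1"
    and der: "\<And>w r. ((\<lambda>s. K (w - s *\<^sub>R e)) has_real_derivative D (w - r *\<^sub>R e)) (at r)"
    and "\<bar>s\<bar> \<le> 1"
  shows "\<bar>K (w - s *\<^sub>R e) - K w\<bar> \<le> C * exp a * exp (- (a / 2) * (norm w)\<^sup>2) * \<bar>s\<bar>"
proof -
  have "norm ((\<lambda>r. K (w - r *\<^sub>R e)) s - (\<lambda>r. K (w - r *\<^sub>R e)) 0)
      \<le> C * exp a * exp (- (a / 2) * (norm w)\<^sup>2) * norm (s - 0)"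
  proof (rule field_differentiable_bound[where S = "{-1..1}"])
    show "((\<lambda>r. K (w - r *\<^sub>R e)) has_field_derivative D (w - r *\<^sub>R e)) (at r within {-1..1})" for r
      using der by (rule has_field_derivative_at_within)
    show "norm (D (w - r *\<^sub>R e)) \<le> C * exp a * exp (- (a / 2) * (norm w)\<^sup>2)" if "r \<in> {-1..1}" for r
    proof -
      have "norm (r *\<^sub>R e) \<le> 1"
        using that \<open>norm e \<le> 1\<close> by (auto intro: mult_le_one)
      then have "exp (- a * (norm (w - r *\<^sub>R e))\<^sup>2) \<le> exp a * exp (- (a / 2) * (norm w)\<^sup>2)"
        by (rule exp_neg_norm_diff_sq_le[OF \<open>a \<ge> 0\<close>])
      then show ?thesis
        using D[of "w - r *\<^sub>R e"] gaussian_bound_nonneg[OF D]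
        by (auto simp: mult.assoc intro: order_trans[OF _ mult_left_mono])
    qed
  qed (use \<open>\<bar>s\<bar> \<le> 1\<close> in auto)
  then show ?thesis
    by simp
qed

lemma kernel_difference_quotient_le:
  fixes K D :: "'a::real_normed_vector \<Rightarrow> real"
  assumes "a > 0" and D: "\<And>w. \<bar>D w\<bar> \<le> C * exp (- a * (norm w)\<^sup>2)" and "norm e \<le> 1"
    and der: "\<And>w r. ((\<lambda>s. K (w - s *\<^sub>R e)) has_real_derivative D (w - r *\<^sub>R e)) (at r)"
    and lip: "L-lipschitz_on UNIV h" and "\<bar>s\<bar> \<le> 1"
  shows "\<bar>(K (y - x - s *\<^sub>R e) - K (y - x)) / s * h y\<bar>
    \<le> C * exp a * ((\<bar>h x\<bar> + L) * (1 + 4 / a)) * exp (- (a / 4) * (norm (y - x))\<^sup>2)"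
proof -
  have "C \<ge> 0" "L \<ge> 0"
    using gaussian_bound_nonneg[OF D] lipschitz_on_nonneg[OF lip] .
  have "\<bar>K (y - x - s *\<^sub>R e) - K (y - x)\<bar> / \<bar>s\<bar> \<le> C * exp a * exp (- (a / 2) * (norm (y - x))\<^sup>2)"
    using gaussian_difference_le[OF _ D \<open>norm e \<le> 1\<close> der \<open>\<bar>s\<bar> \<le> 1\<close>, of "y - x"] assms(1) \<open>C \<ge> 0\<close>
    by (cases "s = 0") (simp_all add: divide_le_eq)
  then have "\<bar>K (y - x - s *\<^sub>R e) - K (y - x)\<bar> / \<bar>s\<bar> * \<bar>h y\<bar>
      \<le> C * exp a * exp (- (a / 2) * (norm (y - x))\<^sup>2) * \<bar>h y\<bar>"
    by (rule mult_right_mono) simp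
  also have "\<dots> = C * exp a * (\<bar>h y\<bar> * exp (- (a / 2) * (norm (y - x))\<^sup>2))"
    by (simp add: mult_ac)
  also have "\<dots> \<le> C * exp a * ((\<bar>h x\<bar> + L) * (1 + 4 / a) * exp (- (a / 4) * (norm (y - x))\<^sup>2))"
    using lipschitz_mult_gaussian_le[OF assms(1) lip, of y x] \<open>C \<ge> 0\<close> by (intro mult_left_mono) auto
  finally show ?thesis
    by (simp add: abs_mult abs_divide mult_ac)
qed

lemma kernel_transform_difference_quotient:
  fixes K :: "'a::euclidean_space \<Rightarrow> real"
  assumes "a > 0" and "gaussian_decay a K" and [measurable]: "K \<in> borel_measurable borel"
    and lip: "L-lipschitz_on UNIV h"
  shows "(kernel_transform K h (x + s *\<^sub>R e) - kernel_transform K h x) / s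
    = (\<integral>y. (K (y - x - s *\<^sub>R e) - K (y - x)) / s * h y \<partial>lborel)"
proof -
  note int = integrable_kernel_transform[OF assms]
  have "kernel_transform K h (x + s *\<^sub>R e) - kernel_transform K h x
      = (\<integral>y. K (y - x - s *\<^sub>R e) * h y - K (y - x) * h y \<partial>lborel)"
    using int[of "x + s *\<^sub>R e"] int[of x]
    by (simp add: kernel_transform_def diff_diff_eq[symmetric] Bochner_Integration.integral_diff)
  then show ?thesis
    by (simp add: left_diff_distrib)
qed

lemma has_real_derivative_kernel_transform:
  fixes K D :: "'a::euclidean_space \<Rightarrow> real"
  assumes "a > 0" and "gaussian_decay a K" and "gaussian_decay a D"
    and [measurable]: "K \<in> borel_measurable borel" "D \<in> borel_measurable borel"
    and lip: "L-lipschitz_on UNIV h" and "norm e \<le> 1"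
    and der: "\<And>w r. ((\<lambda>s. K (w - s *\<^sub>R e)) has_real_derivative D (w - r *\<^sub>R e)) (at r)"
  shows "((\<lambda>s. kernel_transform K h (x + s *\<^sub>R e)) has_real_derivative kernel_transform D h x) (at 0)"
proof -
  obtain C where C: "\<And>w. \<bar>D w\<bar> \<le> C * exp (- a * (norm w)\<^sup>2)"
    using assms(3) by (auto simp: gaussian_decay_def)
  have [measurable]: "h \<in> borel_measurable borel"
    using lip by (rule lipschitz_on_borel_measurable)
  define q where "q s y = (K (y - x - s *\<^sub>R e) - K (y - x)) / s * h y" for s y
  have [measurable]: "q s \<in> borel_measurable borel" for s
    unfolding q_def by measurable
  have quotient: "(kernel_transform K h (x + s *\<^sub>R e) - kernel_transform K h (x + 0 *\<^sub>R e)) / (s - 0)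
      = integral\<^sup>L lborel (q s)" for s
    using kernel_transform_difference_quotient[OF assms(1,2,4) lip] by (simp add: q_def[abs_def])
  have "((\<lambda>s. integral\<^sup>L lborel (q s)) \<longlongrightarrow> (\<integral>y. D (y - x) * h y \<partial>lborel)) (at 0)"
  proof (rule integral_dominated_convergence_at)
    show "integrable lborel
        (\<lambda>y. C * exp a * ((\<bar>h x\<bar> + L) * (1 + 4 / a)) * exp (- (a / 4) * (norm (y - x))\<^sup>2))"
      using integrable_gaussian[of "a / 4" x] assms(1) by simp
    show "AE y in lborel. ((\<lambda>s. q s y) \<longlongrightarrow> D (y - x) * h y) (at 0)"
    proof (rule AE_I2)
      fix y
      have "((\<lambda>s. (K (y - x - s *\<^sub>R e) - K (y - x - 0 *\<^sub>R e)) / (s - 0)) \<longlongrightarrow> D (y - x - 0 *\<^sub>R e)) (at 0)"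
        using der[of "y - x" 0] by (simp only: has_field_derivative_iff)
      then show "((\<lambda>s. q s y) \<longlongrightarrow> D (y - x) * h y) (at 0)"
        unfolding q_def by (intro tendsto_mult_right) simp
    qed
    have "\<forall>\<^sub>F s in at (0::real). \<bar>s\<bar> \<le> 1"
      unfolding eventually_at by (intro exI[of _ 1]) (simp add: dist_real_def)
    then show "\<forall>\<^sub>F s in at 0. AE y in lborel. norm (q s y)
        \<le> C * exp a * ((\<bar>h x\<bar> + L) * (1 + 4 / a)) * exp (- (a / 4) * (norm (y - x))\<^sup>2)"
      unfolding q_def real_norm_def
      by (rule eventually_mono) (intro AE_I2 kernel_difference_quotient_le[OF assms(1) C \<open>norm e \<le> 1\<close> der lip])
  qed simp_all
  then show ?thesis
    unfolding has_field_derivative_iff quotient by (simp only: kernel_transform_def)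
qed

lemma partial_kernel_transform:
  fixes K D :: "real ^ 'n \<Rightarrow> real"
  assumes "a > 0" and "gaussian_decay a K" and "gaussian_decay a D"
    and "K \<in> borel_measurable borel" "D \<in> borel_measurable borel" and "L-lipschitz_on UNIV h"
    and "\<And>w r. ((\<lambda>s. K (w - s *\<^sub>R axis i 1)) has_real_derivative D (w - r *\<^sub>R axis i 1)) (at r)"
  shows "partial i (kernel_transform K h) = kernel_transform D h"
  unfolding partial_def fun_eq_iff
  by (intro allI DERIV_imp_deriv has_real_derivative_kernel_transform[OF assms(1-6)] assms(7)) simp

section \<open>Derivatives of the heat semigroup\<close>

lemma heat_sg_eq_kernel_transform: "heat_sg t = kernel_transform (heat_kernel t)"
  by (simp add: fun_eq_iff heat_sg_def kernel_transform_def)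

text \<open>
  Minus the directional derivatives of the heat kernel, because \<open>x\<close> enters \<^const>\<open>heat_sg\<close>
  through \<open>y - x\<close>.
\<close>

definition heat_kernel_deriv :: "real \<Rightarrow> real ^ 'n \<Rightarrow> real ^ 'n \<Rightarrow> real" where
  "heat_kernel_deriv t u w = heat_kernel t w * (w \<bullet> u) / t"

definition heat_kernel_deriv2 :: "real \<Rightarrow> real ^ 'n \<Rightarrow> real ^ 'n \<Rightarrow> real ^ 'n \<Rightarrow> real" where
  "heat_kernel_deriv2 t u v w = heat_kernel t w * ((w \<bullet> u) * (w \<bullet> v) / t\<^sup>2 - (u \<bullet> v) / t)"

lemma heat_kernel_deriv_measurable [measurable]: "heat_kernel_deriv t u \<in> borel_measurable borel"
  unfolding heat_kernel_deriv_def[abs_def] by measurable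

lemma heat_kernel_deriv2_measurable [measurable]: "heat_kernel_deriv2 t u v \<in> borel_measurable borel"
  unfolding heat_kernel_deriv2_def[abs_def] by measurable

lemma heat_kernel_shift_has_real_derivative:
  fixes w e :: "real ^ 'n"
  assumes "t > 0"
  shows "((\<lambda>s. heat_kernel t (w - s *\<^sub>R e)) has_real_derivative heat_kernel_deriv t e (w - r *\<^sub>R e)) (at r)"
proof -
  have norm_sq: "(norm (w - s *\<^sub>R e))\<^sup>2 = (norm w)\<^sup>2 - 2 * s * (w \<bullet> e) + s\<^sup>2 * (e \<bullet> e)" for s
    unfolding power2_norm_eq_inner
    by (simp add: inner_diff_left inner_diff_right inner_commute algebra_simps power2_eq_square)
  have "((\<lambda>s. (2 * pi * t) powr (- real CARD('n) / 2)
        * exp (- ((norm w)\<^sup>2 - 2 * s * (w \<bullet> e) + s\<^sup>2 * (e \<bullet> e)) / (2 * t)))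
      has_real_derivative (2 * pi * t) powr (- real CARD('n) / 2)
        * exp (- ((norm w)\<^sup>2 - 2 * r * (w \<bullet> e) + r\<^sup>2 * (e \<bullet> e)) / (2 * t))
        * ((w \<bullet> e - r * (e \<bullet> e)) / t)) (at r)"
    using assms by (auto intro!: derivative_eq_intros simp: field_simps power2_eq_square)
  then show ?thesis
    by (simp add: heat_kernel_def heat_kernel_deriv_def norm_sq inner_diff_left)
qed

lemma heat_kernel_deriv_shift_has_real_derivative:
  fixes w e u :: "real ^ 'n"
  assumes "t > 0"
  shows "((\<lambda>s. heat_kernel_deriv t u (w - s *\<^sub>R e)) has_real_derivative
      heat_kernel_deriv2 t e u (w - r *\<^sub>R e)) (at r)"
proof -
  have eq: "(\<lambda>s. heat_kernel_deriv t u (w - s *\<^sub>R e))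
      = (\<lambda>s. heat_kernel t (w - s *\<^sub>R e) * ((w \<bullet> u - s * (e \<bullet> u)) / t))"
    by (simp add: fun_eq_iff heat_kernel_deriv_def inner_diff_left)
  have rhs: "heat_kernel_deriv t e (w - r *\<^sub>R e) * ((w \<bullet> u - r * (e \<bullet> u)) / t)
      + (- (e \<bullet> u) / t) * heat_kernel t (w - r *\<^sub>R e) = heat_kernel_deriv2 t e u (w - r *\<^sub>R e)"
    using assms
    by (simp add: heat_kernel_deriv_def heat_kernel_deriv2_def inner_diff_left power2_eq_square field_simps)
  show ?thesis
    unfolding eq rhs[symmetric]
    by (intro DERIV_mult heat_kernel_shift_has_real_derivative[OF assms])
      (use assms in \<open>auto intro!: derivative_eq_intros\<close>)
qed

lemma gaussian_decay_heat_kernel_times_poly: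
  fixes K :: "real ^ 'n \<Rightarrow> real"
  assumes "t > 0" and bound: "\<And>w. \<bar>K w\<bar> \<le> C * (1 + (norm w)\<^sup>2) * heat_kernel t w"
  shows "gaussian_decay (1 / (4 * t)) K"
proof -
  define c where "c = (2 * pi * t) powr (- real CARD('n) / 2)"
  have "c > 0"
    using assms(1) by (simp add: c_def)
  have "0 \<le> C * heat_kernel t (0 :: real ^ 'n)"
    using order_trans[OF abs_ge_zero bound[of 0]] by simp
  then have "C \<ge> 0"
    using heat_kernel_pos[OF assms(1), of 0] by (metis mult_neg_pos not_le)
  have "\<bar>K w\<bar> \<le> C * c * (1 + 4 * t) * exp (- (1 / (4 * t)) * (norm w)\<^sup>2)" for w
  proof -
    have "heat_kernel t w = c * exp (- (2 * (1 / (4 * t))) * (norm w)\<^sup>2)"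
      using assms(1) by (simp add: heat_kernel_def c_def)
    then have "\<bar>K w\<bar> \<le> C * c * ((1 + (norm w)\<^sup>2) * exp (- (2 * (1 / (4 * t))) * (norm w)\<^sup>2))"
      using bound[of w] by (simp add: mult_ac)
    also have "\<dots> \<le> C * c * ((1 + 1 / (1 / (4 * t))) * exp (- (1 / (4 * t)) * (norm w)\<^sup>2))"
      using one_plus_square_mult_exp_le[of "1 / (4 * t)" "norm w"] assms(1) \<open>C \<ge> 0\<close> \<open>c > 0\<close>
      by (intro mult_left_mono) auto
    finally show ?thesis
      by (simp add: mult_ac)
  qed
  then show ?thesis
    unfolding gaussian_decay_def by blast
qed

lemma gaussian_decay_heat_kernel: "t > 0 \<Longrightarrow> gaussian_decay (1 / (4 * t)) (heat_kernel t)"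
  by (rule gaussian_decay_heat_kernel_times_poly[where C = 1])
    (simp_all add: abs_of_pos heat_kernel_pos distrib_right less_imp_le[OF heat_kernel_pos])

lemma gaussian_decay_heat_kernel_deriv:
  fixes u :: "real ^ 'n"
  assumes "t > 0"
  shows "gaussian_decay (1 / (4 * t)) (heat_kernel_deriv t u)"
proof (rule gaussian_decay_heat_kernel_times_poly[OF assms, where C = "norm u / t"])
  fix w :: "real ^ 'n"
  have "norm w \<le> 1 + (norm w)\<^sup>2"
    by (rule le_one_plus_square)
  then have "\<bar>w \<bullet> u\<bar> \<le> (1 + (norm w)\<^sup>2) * norm u"
    using Cauchy_Schwarz_ineq2[of w u] by (meson mult_right_mono norm_ge_zero order_trans)
  then have "heat_kernel t w * \<bar>w \<bullet> u\<bar> / t \<le> heat_kernel t w * ((1 + (norm w)\<^sup>2) * norm u) / t"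
    using assms heat_kernel_pos[OF assms, of w] by (intro divide_right_mono mult_left_mono) auto
  then show "\<bar>heat_kernel_deriv t u w\<bar> \<le> norm u / t * (1 + (norm w)\<^sup>2) * heat_kernel t w"
    using assms heat_kernel_pos[OF assms, of w]
    by (simp add: heat_kernel_deriv_def abs_mult abs_divide field_simps)
qed

lemma gaussian_decay_heat_kernel_deriv2:
  fixes u v :: "real ^ 'n"
  assumes "t > 0"
  shows "gaussian_decay (1 / (4 * t)) (heat_kernel_deriv2 t u v)"
proof (rule gaussian_decay_heat_kernel_times_poly[OF assms, where C = "norm u * norm v * (1 / t\<^sup>2 + 1 / t)"])
  fix w :: "real ^ 'n"
  have "\<bar>(w \<bullet> u) * (w \<bullet> v)\<bar> \<le> (norm w * norm u) * (norm w * norm v)"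
    unfolding abs_mult by (intro mult_mono Cauchy_Schwarz_ineq2) auto
  then have "\<bar>(w \<bullet> u) * (w \<bullet> v) / t\<^sup>2 - (u \<bullet> v) / t\<bar>
      \<le> (norm w)\<^sup>2 * (norm u * norm v) / t\<^sup>2 + norm u * norm v / t"
    using Cauchy_Schwarz_ineq2[of u v] assms
    by (intro order_trans[OF abs_triangle_ineq4] add_mono)
      (auto simp: abs_divide power2_eq_square mult_ac intro!: divide_right_mono)
  also have "\<dots> \<le> norm u * norm v * (1 / t\<^sup>2 + 1 / t) * (1 + (norm w)\<^sup>2)"
    using assms by (simp add: field_simps)
  finally show "\<bar>heat_kernel_deriv2 t u v w\<bar> \<le> norm u * norm v * (1 / t\<^sup>2 + 1 / t) * (1 + (norm w)\<^sup>2) * heat_kernel t w"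
    using heat_kernel_pos[OF assms, of w]
    by (simp add: heat_kernel_deriv2_def abs_mult mult_ac mult_left_mono)
qed

lemma partial_heat_sg:
  assumes "t > 0" and "L-lipschitz_on UNIV h"
  shows "partial j (heat_sg t h) = kernel_transform (heat_kernel_deriv t (axis j 1)) h"
  unfolding heat_sg_eq_kernel_transform
  using assms(1)
  by (intro partial_kernel_transform[where a = "1 / (4 * t)", OF _ _ _ _ _ assms(2)] gaussian_decay_heat_kernel
      gaussian_decay_heat_kernel_deriv heat_kernel_shift_has_real_derivative) auto

lemma hessian_heat_sg:
  assumes "t > 0" and "L-lipschitz_on UNIV h"
  shows "hessian (heat_sg t h) x $ i $ j
    = kernel_transform (heat_kernel_deriv2 t (axis i 1) (axis j 1)) h x"
  unfolding hessian_def partial_heat_sg[OF assms]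
  using assms(1)
  by (simp, subst partial_kernel_transform[where a = "1 / (4 * t)", OF _ _ _ _ _ assms(2)])
    (auto intro: gaussian_decay_heat_kernel_deriv gaussian_decay_heat_kernel_deriv2
      heat_kernel_deriv_shift_has_real_derivative)

section \<open>Lipschitz bound for the Hessian\<close>

lemma heat_kernel_deriv2_eq_sum_axis:
  fixes u v w :: "real ^ 'n"
  shows "heat_kernel_deriv2 t u v w
    = (\<Sum>i\<in>UNIV. \<Sum>j\<in>UNIV. u $ i * v $ j * heat_kernel_deriv2 t (axis i 1) (axis j 1) w)"
proof -
  have axis_nth_eq: "axis i (1::real) $ j = (if j = i then 1 else 0)" for i j :: 'n
    by (simp add: axis_def)
  have "(\<Sum>i\<in>UNIV. \<Sum>j\<in>UNIV. u $ i * v $ j * heat_kernel_deriv2 t (axis i 1) (axis j 1) w)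
      = heat_kernel t w * ((\<Sum>i\<in>UNIV. \<Sum>j\<in>UNIV. (w $ i * u $ i) * (w $ j * v $ j)) / t\<^sup>2
          - (\<Sum>i\<in>UNIV. \<Sum>j\<in>UNIV. if i = j then u $ i * v $ j else 0) / t)"
    by (simp add: heat_kernel_deriv2_def inner_axis inner_axis_axis axis_nth_eq sum_distrib_left
        sum_subtractf sum_divide_distrib right_diff_distrib diff_divide_distrib mult_ac
        if_distrib[of "\<lambda>x. _ * x"] if_distrib[of "\<lambda>x. x / _"] cong: if_cong)
  also have "\<dots> = heat_kernel_deriv2 t u v w"
    by (simp add: heat_kernel_deriv2_def inner_vec_def sum_product mult_ac)
  finally show ?thesis ..
qed

lemma hs_inner_hessian_heat_sg_outer:
  assumes "t > 0" and lip: "L-lipschitz_on UNIV h"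
  shows "hs_inner (hessian (heat_sg t h) x) (outer u v) = kernel_transform (heat_kernel_deriv2 t u v) h x"
proof -
  have int: "integrable lborel (\<lambda>y. heat_kernel_deriv2 t p q (y - x) * h y)" for p q
    using assms(1)
    by (intro integrable_kernel_transform[OF _ gaussian_decay_heat_kernel_deriv2 _ lip]) auto
  have "hs_inner (hessian (heat_sg t h) x) (outer u v)
      = (\<Sum>i\<in>UNIV. \<Sum>j\<in>UNIV. u $ i * (v $ j * kernel_transform (heat_kernel_deriv2 t (axis i 1) (axis j 1)) h x))"
    by (simp add: hs_inner_def outer_def hessian_heat_sg[OF assms] mult_ac)
  also have "\<dots> = kernel_transform (heat_kernel_deriv2 t u v) h x"
    unfolding kernel_transform_def heat_kernel_deriv2_eq_sum_axis[of t u v] sum_distrib_right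
    by (simp add: Bochner_Integration.integral_sum Bochner_Integration.integrable_sum int mult.assoc)
  finally show ?thesis .
qed

lemma abs_mult_le_weighted_squares:
  fixes a b \<alpha> :: real
  assumes "\<alpha> > 0"
  shows "\<bar>a * b\<bar> \<le> (\<alpha> * a\<^sup>2 + b\<^sup>2 / \<alpha>) / 2"
proof -
  have "2 * (\<alpha> * \<bar>a\<bar>) * \<bar>b\<bar> \<le> (\<alpha> * \<bar>a\<bar>)\<^sup>2 + \<bar>b\<bar>\<^sup>2"
    by (rule sum_squares_bound)
  then show ?thesis
    using assms by (simp add: abs_mult field_simps power2_eq_square)
qed

lemma abs_heat_kernel_deriv2_le:
  fixes u v z :: "real ^ 'n"
  assumes "t > 0" and "\<alpha> > 0"
  shows "\<bar>heat_kernel_deriv2 t u v z\<bar>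
    \<le> \<alpha> / (2 * t\<^sup>2) * (heat_kernel t z * (z \<bullet> u) * (z \<bullet> u))
      + 1 / (2 * \<alpha> * t\<^sup>2) * (heat_kernel t z * (z \<bullet> v) * (z \<bullet> v))
      + norm u * norm v / t * heat_kernel t z"
proof -
  have "\<bar>(z \<bullet> u) * (z \<bullet> v)\<bar> / t\<^sup>2 \<le> (\<alpha> * (z \<bullet> u)\<^sup>2 + (z \<bullet> v)\<^sup>2 / \<alpha>) / (2 * t\<^sup>2)"
    using abs_mult_le_weighted_squares[OF assms(2), of "z \<bullet> u" "z \<bullet> v"] assms(1)
    by (simp add: field_simps)
  moreover have "\<bar>u \<bullet> v\<bar> / t \<le> norm u * norm v / t"
    using Cauchy_Schwarz_ineq2[of u v] assms(1) by (simp add: divide_right_mono)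
  ultimately have "\<bar>(z \<bullet> u) * (z \<bullet> v) / t\<^sup>2 - (u \<bullet> v) / t\<bar>
      \<le> (\<alpha> * (z \<bullet> u)\<^sup>2 + (z \<bullet> v)\<^sup>2 / \<alpha>) / (2 * t\<^sup>2) + norm u * norm v / t"
    using abs_triangle_ineq4[of "(z \<bullet> u) * (z \<bullet> v) / t\<^sup>2" "(u \<bullet> v) / t"]
    unfolding abs_divide abs_of_pos[OF assms(1)] abs_power2 by linarith
  then have "heat_kernel t z * \<bar>(z \<bullet> u) * (z \<bullet> v) / t\<^sup>2 - (u \<bullet> v) / t\<bar>
      \<le> heat_kernel t z * ((\<alpha> * (z \<bullet> u)\<^sup>2 + (z \<bullet> v)\<^sup>2 / \<alpha>) / (2 * t\<^sup>2) + norm u * norm v / t)"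
    using heat_kernel_pos[OF assms(1), of z] by (intro mult_left_mono) auto
  also have "\<dots> = \<alpha> / (2 * t\<^sup>2) * (heat_kernel t z * (z \<bullet> u) * (z \<bullet> u))
      + 1 / (2 * \<alpha> * t\<^sup>2) * (heat_kernel t z * (z \<bullet> v) * (z \<bullet> v))
      + norm u * norm v / t * heat_kernel t z"
    using assms by (simp add: field_simps power2_eq_square)
  finally show ?thesis
    using heat_kernel_pos[OF assms(1), of z] by (simp add: heat_kernel_deriv2_def abs_mult)
qed

lemma integral_abs_heat_kernel_deriv2_le:
  fixes u v :: "real ^ 'n"
  assumes "t > 0"
  shows "(\<integral>z. \<bar>heat_kernel_deriv2 t u v z\<bar> \<partial>lborel) \<le> 2 * norm u * norm v / t"
proof (cases "u = 0 \<or> v = 0")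
  case True
  then show ?thesis
    by (auto simp: heat_kernel_deriv2_def)
next
  case False
  define \<alpha> where "\<alpha> = norm v / norm u"
  have "\<alpha> > 0"
    using False by (simp add: \<alpha>_def)
  define R where "R z = \<alpha> / (2 * t\<^sup>2) * (heat_kernel t z * (z \<bullet> u) * (z \<bullet> u))
      + 1 / (2 * \<alpha> * t\<^sup>2) * (heat_kernel t z * (z \<bullet> v) * (z \<bullet> v)) + norm u * norm v / t * heat_kernel t z"
    for z :: "real ^ 'n"
  have "(\<integral>z. \<bar>heat_kernel_deriv2 t u v z\<bar> \<partial>lborel) \<le> integral\<^sup>L lborel R"
  proof (rule integral_mono)
    show "integrable lborel (\<lambda>z. \<bar>heat_kernel_deriv2 t u v z\<bar>)"
      using assms
      by (intro integrable_abs integrable_gaussian_decay[OF _ gaussian_decay_heat_kernel_deriv2[OF assms]]) auto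
    show "integrable lborel R"
      unfolding R_def[abs_def] using assms
      by (intro Bochner_Integration.integrable_add Bochner_Integration.integrable_mult_right
          integrable_heat_kernel_inner_inner integrable_heat_kernel)
    show "\<bar>heat_kernel_deriv2 t u v z\<bar> \<le> R z" for z
      unfolding R_def by (rule abs_heat_kernel_deriv2_le[OF assms \<open>\<alpha> > 0\<close>])
  qed
  also have "integral\<^sup>L lborel R = \<alpha> / (2 * t\<^sup>2) * (t * (u \<bullet> u))
      + 1 / (2 * \<alpha> * t\<^sup>2) * (t * (v \<bullet> v)) + norm u * norm v / t * 1"
    unfolding R_def[abs_def] using assms
    by (simp add: Bochner_Integration.integral_add integrable_heat_kernel_inner_inner
        integral_heat_kernel_inner_inner integrable_heat_kernel integral_heat_kernel)
  also have "\<dots> = 2 * norm u * norm v / t"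
    using assms False
    by (simp add: \<alpha>_def power2_norm_eq_inner[symmetric] field_simps power2_eq_square)
  finally show ?thesis .
qed

lemma hs_inner_diff_left: "hs_inner (A - B) C = hs_inner A C - hs_inner B C"
  by (simp add: hs_inner_def sum_subtractf left_diff_distrib)

lemma hs_inner_outer_axis: "hs_inner A (outer (axis i 1) (axis i 1)) = A $ i $ i"
  by (simp add: hs_inner_def outer_def axis_def if_distrib[of "\<lambda>x. _ * x"] cong: if_cong)

lemma hs_inner_hessian_heat_sg_diff_le:
  assumes "t > 0" and lip: "L-lipschitz_on UNIV h"
  shows "\<bar>hs_inner (hessian (heat_sg t h) y - hessian (heat_sg t h) x) (outer u v)\<bar>
    \<le> 2 * L * norm u * norm v * dist y x / t"
proof -
  let ?T = "kernel_transform (heat_kernel_deriv2 t u v) h"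
  have "(L * (\<integral>z. \<bar>heat_kernel_deriv2 t u v z\<bar> \<partial>lborel))-lipschitz_on UNIV ?T"
    using assms(1)
    by (intro lipschitz_on_kernel_transform[OF _ gaussian_decay_heat_kernel_deriv2 _ lip]) auto
  then have "\<bar>?T y - ?T x\<bar> \<le> L * (\<integral>z. \<bar>heat_kernel_deriv2 t u v z\<bar> \<partial>lborel) * dist y x"
    using lipschitz_onD[of _ UNIV ?T y x] by (simp add: dist_real_def)
  also have "\<dots> \<le> L * (2 * norm u * norm v / t) * dist y x"
    using integral_abs_heat_kernel_deriv2_le[OF assms(1)] lipschitz_on_nonneg[OF lip]
    by (intro mult_right_mono mult_left_mono) auto
  finally show ?thesis
    by (simp add: hs_inner_diff_left hs_inner_hessian_heat_sg_outer[OF assms] mult_ac)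
qed

theorem lemma4p9:
  fixes h :: "real ^ 'n \<Rightarrow> real" and x v v1 v2 :: "real ^ 'n" and t :: real
  assumes "1-lipschitz_on UNIV h" and "t > 0"
  shows "\<bar>hs_inner (hessian (heat_sg t h) (x + v) - hessian (heat_sg t h) x) (outer v1 v2)\<bar>
           \<le> 2 * norm v1 * norm v2 * norm v / t \<and>
         \<bar>laplacian (heat_sg t h) (x + v) - laplacian (heat_sg t h) x\<bar>
           \<le> 2 * real CARD('n) / t * norm v"
proof
  note hessian_bound = hs_inner_hessian_heat_sg_diff_le[OF assms(2,1), of "x + v" x]
  show "\<bar>hs_inner (hessian (heat_sg t h) (x + v) - hessian (heat_sg t h) x) (outer v1 v2)\<bar>
      \<le> 2 * norm v1 * norm v2 * norm v / t"
    using hessian_bound[of v1 v2] by (simp add: dist_norm)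
  have diagonal: "\<bar>hessian (heat_sg t h) (x + v) $ i $ i - hessian (heat_sg t h) x $ i $ i\<bar> \<le> 2 / t * norm v"
    for i
    using hessian_bound[of "axis i 1" "axis i 1"] by (simp add: dist_norm hs_inner_outer_axis)
  have "\<bar>laplacian (heat_sg t h) (x + v) - laplacian (heat_sg t h) x\<bar>
      \<le> (\<Sum>i\<in>UNIV. \<bar>hessian (heat_sg t h) (x + v) $ i $ i - hessian (heat_sg t h) x $ i $ i\<bar>)"
    unfolding laplacian_def sum_subtractf[symmetric] by (rule sum_abs)
  also have "\<dots> \<le> (\<Sum>i\<in>(UNIV :: 'n set). 2 / t * norm v)"
    by (rule sum_mono) (rule diagonal)
  also have "\<dots> = 2 * real CARD('n) / t * norm v"
    by simp
  finally show "\<bar>laplacian (heat_sg t h) (x + v) - laplacian (heat_sg t h) x\<bar>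
      \<le> 2 * real CARD('n) / t * norm v" .
qed

end
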